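(* Let $\alpha\in(0,1]$, $0\le a<b$, and let $f:[a,b]\to\mathbb{R}$ be $\alpha$-fractional differentiable. If $D_\alpha f$ is increasing on $[a,b]$, then $$ \frac{\alpha}{b^\alpha-a^\alpha}\int_a^b f(t)\,d_\alpha t\le\frac{f(b)+f(a)}{2}. $$ If $D_\alpha f$ is decreasing on $[a,b]$, the inequality is reversed.
   Context: The conformable $\alpha$-fractional derivative is $D_\alpha f(t):=\lim_{\varepsilon\to 0}\frac{f(t+\varepsilon t^{1-\alpha})-f(t)}{\varepsilon}$ for $t>0$, $D_\alpha f(0):=\lim_{t\to0^+}D_\alpha f(t)$. Integrals: $\int_a^b h(t)\,d_\alpha t:=\int_a^b h(t)t^{\alpha-1}\,dt$. *)

theory Defs
  imports "HOL-Analysis.Analysis"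
begin

definition conf_quot :: "real \<Rightarrow> (real \<Rightarrow> real) \<Rightarrow> real \<Rightarrow> real \<Rightarrow> real" where
  "conf_quot \<alpha> f t \<epsilon> = (f (t + \<epsilon> * t powr (1 - \<alpha>)) - f t) / \<epsilon>"

text \<open>For t > 0 in [a,b]: D is the alpha-derivative of f (restricted to [a,b]) at t;
  the limit is taken over increments keeping the argument in [a,b]
  (one-sided at the endpoints).\<close>
definition conf_has_deriv :: "real \<Rightarrow> (real \<Rightarrow> real) \<Rightarrow> real \<Rightarrow> real \<Rightarrow> real \<Rightarrow> real \<Rightarrow> bool" where
  "conf_has_deriv \<alpha> f a b t D \<longleftrightarrow>
     (conf_quot \<alpha> f t \<longlongrightarrow> D) (at 0 within {\<epsilon>. t + \<epsilon> * t powr (1 - \<alpha>) \<in> {a..b}})"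

definition conf_deriv :: "real \<Rightarrow> (real \<Rightarrow> real) \<Rightarrow> real \<Rightarrow> real \<Rightarrow> real \<Rightarrow> real" where
  "conf_deriv \<alpha> f a b t =
     (if t > 0 then (THE D. conf_has_deriv \<alpha> f a b t D)
      else Lim (at_right 0) (\<lambda>s. THE D. conf_has_deriv \<alpha> f a b s D))"

definition conf_differentiable_on :: "real \<Rightarrow> (real \<Rightarrow> real) \<Rightarrow> real \<Rightarrow> real \<Rightarrow> bool" where
  "conf_differentiable_on \<alpha> f a b \<longleftrightarrow>
     continuous_on {a..b} f \<and>
     (\<forall>t\<in>{a..b}. t > 0 \<longrightarrow> (\<exists>D. conf_has_deriv \<alpha> f a b t D)) \<and>
     (a = 0 \<longrightarrow> (\<exists>L. ((\<lambda>s. THE D. conf_has_deriv \<alpha> f a b s D) \<longlongrightarrow> L) (at_right 0)))"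

definition conf_integral :: "real \<Rightarrow> (real \<Rightarrow> real) \<Rightarrow> real \<Rightarrow> real \<Rightarrow> real" where
  "conf_integral \<alpha> h a b = integral {a..b} (\<lambda>t. h t * t powr (\<alpha> - 1))"

end

theory Submission
  imports Defs
begin

text \<open>With \<open>u t = t\<^sup>\<alpha>/\<alpha>\<close> and \<open>w = u'\<close>, an interior conformable derivative is an ordinary
  one: \<open>f' = D\<^sub>\<alpha>f \<cdot> w\<close>. By a Cauchy mean value argument with respect to \<open>u\<close>, monotonicity
  of \<open>D\<^sub>\<alpha>f\<close> places the graph of \<open>f\<close> below the chord when plotted against \<open>u\<close>, i.e.
  \<open>f t \<le> f a + (f b - f a)(u t - u a)/(u b - u a)\<close>. Integrating against \<open>w\<close>, the chord
  contributes exactly \<open>(u b - u a)(f a + f b)/2\<close>, and \<open>u b - u a = (b\<^sup>\<alpha> - a\<^sup>\<alpha>)/\<alpha>\<close>.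
  The decreasing case is the increasing one applied to \<open>-f\<close>.\<close>

lemma conf_has_deriv_interior_iff:
  assumes "a < t" "t < b" "0 < t"
  shows "conf_has_deriv \<alpha> f a b t D \<longleftrightarrow> (conf_quot \<alpha> f t \<longlongrightarrow> D) (at 0)"
proof -
  define c where "c = t powr (1 - \<alpha>)"
  have "c > 0" unfolding c_def using assms by simp
  have sub: "{(a - t) / c <..< (b - t) / c} \<subseteq> {\<epsilon>. t + \<epsilon> * c \<in> {a..b}}"
  proof
    fix \<epsilon> assume "\<epsilon> \<in> {(a - t) / c <..< (b - t) / c}"
    then have "a - t < \<epsilon> * c" "\<epsilon> * c < b - t"
      using \<open>c > 0\<close> by (auto simp: field_simps)
    then show "\<epsilon> \<in> {\<epsilon>. t + \<epsilon> * c \<in> {a..b}}" by auto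
  qed
  have "0 \<in> {(a - t) / c <..< (b - t) / c}"
    using assms \<open>c > 0\<close> by (auto simp: field_simps)
  then have "0 \<in> interior {\<epsilon>. t + \<epsilon> * c \<in> {a..b}}"
    using interior_maximal[OF sub open_greaterThanLessThan] by blast
  then have "at 0 within {\<epsilon>. t + \<epsilon> * c \<in> {a..b}} = at 0"
    by (rule at_within_interior)
  then show ?thesis
    unfolding conf_has_deriv_def c_def[symmetric] by (simp only:)
qed

lemma DERIV_of_conf_quot_tendsto:
  assumes "0 < t" and lim: "(conf_quot \<alpha> f t \<longlongrightarrow> D) (at 0)"
  shows "(f has_real_derivative D * t powr (\<alpha> - 1)) (at t)"
proof -
  define c where "c = t powr (1 - \<alpha>)"
  have "c > 0" unfolding c_def using assms by simp
  have "filterlim (\<lambda>h. h / c) (at 0) (at 0)"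
    unfolding filterlim_at using \<open>c > 0\<close>
    by (auto intro!: tendsto_eq_intros simp: eventually_at_filter)
  from filterlim_compose[OF lim this]
  have "((\<lambda>h. conf_quot \<alpha> f t (h / c) / c) \<longlongrightarrow> D / c) (at 0)"
    using \<open>c > 0\<close> by (intro tendsto_divide) (auto simp: o_def)
  moreover have "(\<lambda>h. conf_quot \<alpha> f t (h / c) / c) = (\<lambda>h. (f (t + h) - f t) / h)"
    using \<open>c > 0\<close> by (auto simp: conf_quot_def c_def[symmetric] fun_eq_iff)
  moreover have "inverse c = t powr (\<alpha> - 1)"
    unfolding c_def by (metis minus_diff_eq powr_minus)
  ultimately show ?thesis
    unfolding DERIV_def divide_inverse by simp
qed

lemma conf_deriv_eqI:
  assumes "a < t" "t < b" "0 < t" and D: "conf_has_deriv \<alpha> f a b t D"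
  shows "conf_deriv \<alpha> f a b t = D"
proof -
  have "D' = D" if "conf_has_deriv \<alpha> f a b t D'" for D'
    using that D tendsto_unique[OF at_neq_bot]
    unfolding conf_has_deriv_interior_iff[OF assms(1-3)] by blast
  then have "(THE D. conf_has_deriv \<alpha> f a b t D) = D"
    using D by blast
  then show ?thesis
    unfolding conf_deriv_def using \<open>0 < t\<close> by simp
qed

lemma conf_differentiable_on_imp_DERIV:
  assumes "conf_differentiable_on \<alpha> f a b" "0 \<le> a" "a < t" "t < b"
  shows "(f has_real_derivative conf_deriv \<alpha> f a b t * t powr (\<alpha> - 1)) (at t)"
proof -
  have "0 < t" using assms by linarith
  have "\<exists>D. conf_has_deriv \<alpha> f a b t D"
    using assms(1,3,4) \<open>0 < t\<close> unfolding conf_differentiable_on_def by auto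
  then obtain D where D: "conf_has_deriv \<alpha> f a b t D" ..
  then have "(conf_quot \<alpha> f t \<longlongrightarrow> D) (at 0)"
    using conf_has_deriv_interior_iff[OF assms(3,4) \<open>0 < t\<close>] by blast
  then show ?thesis
    unfolding conf_deriv_eqI[OF assms(3,4) \<open>0 < t\<close> D] by (rule DERIV_of_conf_quot_tendsto[OF \<open>0 < t\<close>])
qed

lemma weighted_Cauchy_mvt:
  fixes f u h w :: "real \<Rightarrow> real"
  assumes "x < y" "continuous_on {x..y} f" "continuous_on {x..y} u"
    and df: "\<And>t. t \<in> {x<..<y} \<Longrightarrow> (f has_real_derivative h t * w t) (at t)"
    and du: "\<And>t. t \<in> {x<..<y} \<Longrightarrow> (u has_real_derivative w t) (at t)"
    and wpos: "\<And>t. t \<in> {x<..<y} \<Longrightarrow> 0 < w t"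
  shows "\<exists>\<xi>\<in>{x<..<y}. f y - f x = h \<xi> * (u y - u x)"
proof -
  define \<psi> where "\<psi> t = (f t - f x) * (u y - u x) - (u t - u x) * (f y - f x)" for t
  define d where "d t = w t * (h t * (u y - u x) - (f y - f x))" for t
  have "continuous_on {x..y} \<psi>"
    unfolding \<psi>_def using assms(2,3) by (intro continuous_intros) auto
  moreover have "(\<psi> has_derivative (*) (d t)) (at t)" if "x < t" "t < y" for t
  proof -
    have "(\<psi> has_real_derivative d t) (at t)"
      unfolding \<psi>_def d_def using df[of t] du[of t] that
      by (auto intro!: derivative_eq_intros simp: algebra_simps)
    then show ?thesis by (simp add: has_field_derivative_def)
  qed
  ultimately obtain \<xi> where \<xi>: "x < \<xi>" "\<xi> < y" "\<psi> y - \<psi> x = d \<xi> * (y - x)"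
    using mvt[OF \<open>x < y\<close>, of \<psi> "\<lambda>t. (*) (d t)"] by blast
  moreover have "\<psi> y - \<psi> x = 0"
    unfolding \<psi>_def by (simp add: algebra_simps)
  ultimately have "d \<xi> = 0" using \<open>x < y\<close> by simp
  then have "f y - f x = h \<xi> * (u y - u x)"
    unfolding d_def using wpos[of \<xi>] \<xi> by simp
  then show ?thesis using \<xi>(1,2) by auto
qed

lemma le_chord_of_mono_on_weighted_deriv:
  fixes f u h w :: "real \<Rightarrow> real"
  assumes "a \<le> t" "t \<le> b"
    and cf: "continuous_on {a..b} f" and cu: "continuous_on {a..b} u"
    and df: "\<And>t. t \<in> {a<..<b} \<Longrightarrow> (f has_real_derivative h t * w t) (at t)"
    and du: "\<And>t. t \<in> {a<..<b} \<Longrightarrow> (u has_real_derivative w t) (at t)"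
    and wpos: "\<And>t. t \<in> {a<..<b} \<Longrightarrow> 0 < w t"
    and mono: "mono_on {a<..<b} h"
  shows "(f t - f a) * (u b - u a) \<le> (f b - f a) * (u t - u a)"
proof -
  consider "t = a" | "t = b" | "a < t" "t < b" using assms(1,2) by fastforce
  then show ?thesis
  proof cases
    case 3
    have sub: "{x..y} \<subseteq> {a..b}" "{x<..<y} \<subseteq> {a<..<b}" if "a \<le> x" "y \<le> b" for x y
      using that by auto
    have u_less: "u x < u y" if "a \<le> x" "x < y" "y \<le> b" for x y
    proof (rule DERIV_pos_imp_increasing_open[OF \<open>x < y\<close>])
      show "continuous_on {x..y} u" using continuous_on_subset[OF cu sub(1)] that by blast
      show "\<exists>D. (u has_real_derivative D) (at s) \<and> 0 < D" if "x < s" "s < y" for s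
        using du wpos that \<open>a \<le> x\<close> \<open>y \<le> b\<close> by force
    qed
    obtain \<xi> where \<xi>: "\<xi> \<in> {a<..<t}" "f t - f a = h \<xi> * (u t - u a)"
      using weighted_Cauchy_mvt[of a t f u h w] 3 sub[of a t] cf cu df du wpos
      by (fastforce intro: continuous_on_subset)
    obtain \<eta> where \<eta>: "\<eta> \<in> {t<..<b}" "f b - f t = h \<eta> * (u b - u t)"
      using weighted_Cauchy_mvt[of t b f u h w] 3 sub[of t b] cf cu df du wpos
      by (fastforce intro: continuous_on_subset)
    define p q where "p = u t - u a" and "q = u b - u t"
    have "0 < p" "0 < q"
      unfolding p_def q_def using u_less[of a t] u_less[of t b] 3 by auto
    have "h \<xi> \<le> h \<eta>"
      using mono_onD[OF mono] \<xi>(1) \<eta>(1) 3 by auto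
    have "f t - f a = h \<xi> * p" "f b - f t = h \<eta> * q"
      using \<xi>(2) \<eta>(2) unfolding p_def q_def .
    then have "f b - f a = h \<xi> * p + h \<eta> * q" by linarith
    have "(f t - f a) * (u b - u a) = h \<xi> * p * p + h \<xi> * (p * q)"
      unfolding \<open>f t - f a = h \<xi> * p\<close> p_def q_def by (simp add: algebra_simps)
    also have "\<dots> \<le> h \<xi> * p * p + h \<eta> * (p * q)"
      using \<open>h \<xi> \<le> h \<eta>\<close> \<open>0 < p\<close> \<open>0 < q\<close> by simp
    also have "\<dots> = (f b - f a) * (u t - u a)"
      unfolding \<open>f b - f a = h \<xi> * p + h \<eta> * q\<close> p_def[symmetric] by (simp add: algebra_simps)
    finally show ?thesis .
  qed simp_all
qed

lemma integrable_continuous_mult_nonneg: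
  fixes f w :: "real \<Rightarrow> real"
  assumes "continuous_on {a..b} f" "w integrable_on {a..b}" "\<And>t. t \<in> {a..b} \<Longrightarrow> 0 \<le> w t"
  shows "(\<lambda>t. f t * w t) integrable_on {a..b}"
proof -
  have "w absolutely_integrable_on {a..b}"
    using assms(2,3) by (intro nonnegative_absolutely_integrable_1) auto
  moreover have "bounded (f ` {a..b})"
    using compact_continuous_image[OF assms(1)] compact_imp_bounded by auto
  moreover have "f \<in> borel_measurable (lebesgue_on {a..b})"
    using assms(1) by (intro continuous_imp_measurable_on_sets_lebesgue) auto
  ultimately have "(\<lambda>t. f t * w t) absolutely_integrable_on {a..b}"
    by (intro absolutely_integrable_bounded_measurable_product_real) auto
  then show ?thesis
    by (rule set_lebesgue_integral_eq_integral(1))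
qed

lemma integral_weighted_le_trapezoid:
  fixes f u h w :: "real \<Rightarrow> real"
  assumes "a < b"
    and cf: "continuous_on {a..b} f" and cu: "continuous_on {a..b} u"
    and df: "\<And>t. t \<in> {a<..<b} \<Longrightarrow> (f has_real_derivative h t * w t) (at t)"
    and du: "\<And>t. t \<in> {a<..<b} \<Longrightarrow> (u has_real_derivative w t) (at t)"
    and wpos: "\<And>t. t \<in> {a<..<b} \<Longrightarrow> 0 < w t"
    and wnn: "\<And>t. t \<in> {a..b} \<Longrightarrow> 0 \<le> w t"
    and mono: "mono_on {a<..<b} h"
  shows "integral {a..b} (\<lambda>t. f t * w t) \<le> (u b - u a) * ((f b + f a) / 2)"
proof -
  have U: "u a < u b"
  proof (rule DERIV_pos_imp_increasing_open[OF \<open>a < b\<close> _ cu])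
    show "\<exists>D. (u has_real_derivative D) (at s) \<and> 0 < D" if "a < s" "s < b" for s
      using du wpos that by force
  qed
  define K where "K = (f b - f a) / (u b - u a)"
  define chord where "chord t = f a + K * (u t - u a)" for t
  define G where "G t = f a * u t + K * (u t - u a)\<^sup>2 / 2" for t
  have "(w has_integral (u b - u a)) {a..b}"
    using \<open>a < b\<close> cu du by (intro fundamental_theorem_of_calculus_interior)
      (auto simp: has_real_derivative_iff_has_vector_derivative[symmetric])
  then have fw_int: "(\<lambda>t. f t * w t) integrable_on {a..b}"
    by (intro integrable_continuous_mult_nonneg[OF cf] wnn) blast
  have chord_int: "((\<lambda>t. chord t * w t) has_integral (G b - G a)) {a..b}"
  proof (rule fundamental_theorem_of_calculus_interior)
    show "continuous_on {a..b} G" unfolding G_def using cu by (intro continuous_intros) auto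
    fix t assume "t \<in> {a<..<b}"
    then have "(G has_real_derivative chord t * w t) (at t)"
      unfolding G_def chord_def using du
      by (auto intro!: derivative_eq_intros simp: field_simps power2_eq_square)
    then show "(G has_vector_derivative chord t * w t) (at t)"
      by (simp add: has_real_derivative_iff_has_vector_derivative)
  qed (use \<open>a < b\<close> in auto)
  have "integral {a..b} (\<lambda>t. f t * w t) \<le> integral {a..b} (\<lambda>t. chord t * w t)"
  proof (rule integral_le[OF fw_int])
    show "(\<lambda>t. chord t * w t) integrable_on {a..b}" using chord_int by blast
    fix t assume t: "t \<in> {a..b}"
    have "f t \<le> chord t"
      using le_chord_of_mono_on_weighted_deriv[of a t b f u h w] t assms U
      unfolding chord_def K_def by (simp add: field_simps)
    then show "f t * w t \<le> chord t * w t" using wnn[OF t] by (rule mult_right_mono)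
  qed
  also have "\<dots> = G b - G a" using chord_int by blast
  also have "\<dots> = (u b - u a) * ((f b + f a) / 2)"
    unfolding G_def K_def using U by (simp add: field_simps power2_eq_square)
  finally show ?thesis .
qed

lemma conf_integral_le_trapezoid:
  fixes g h :: "real \<Rightarrow> real"
  assumes "0 < \<alpha>" "0 \<le> a" "a < b" "continuous_on {a..b} g" "mono_on {a<..<b} h"
    and dg: "\<And>t. t \<in> {a<..<b} \<Longrightarrow> (g has_real_derivative h t * t powr (\<alpha> - 1)) (at t)"
  shows "\<alpha> / (b powr \<alpha> - a powr \<alpha>) * conf_integral \<alpha> g a b \<le> (g b + g a) / 2"
proof -
  define u where "u t = t powr \<alpha> / \<alpha>" for t :: real
  have du: "(u has_real_derivative t powr (\<alpha> - 1)) (at t)" if "t \<in> {a<..<b}" for t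
    using that assms(1,2) has_real_derivative_powr[of t \<alpha>]
    unfolding u_def by (auto intro!: derivative_eq_intros)
  have cu: "continuous_on {a..b} u"
    unfolding u_def using assms(1,2) by (intro continuous_intros continuous_on_powr') auto
  have "u a < u b"
    unfolding u_def using assms by (intro divide_strict_right_mono powr_less_mono2) auto
  have scale: "\<alpha> / (b powr \<alpha> - a powr \<alpha>) = 1 / (u b - u a)"
    unfolding u_def using assms(1) by (simp add: diff_divide_distrib[symmetric])
  have "conf_integral \<alpha> g a b \<le> (u b - u a) * ((g b + g a) / 2)"
    unfolding conf_integral_def
    using integral_weighted_le_trapezoid[OF \<open>a < b\<close> assms(4) cu dg du _ _ assms(5)] assms(2)
    by auto
  then show ?thesis
    unfolding scale using \<open>u a < u b\<close> by (simp add: field_simps)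
qed

theorem mainTheorem14:
  fixes \<alpha> a b :: real and f :: "real \<Rightarrow> real"
  assumes "0 < \<alpha>" "\<alpha> \<le> 1" "0 \<le> a" "a < b"
    and "conf_differentiable_on \<alpha> f a b"
  shows "(mono_on {a..b} (conf_deriv \<alpha> f a b) \<longrightarrow>
           \<alpha> / (b powr \<alpha> - a powr \<alpha>) * conf_integral \<alpha> f a b \<le> (f b + f a) / 2) \<and>
         (antimono_on {a..b} (conf_deriv \<alpha> f a b) \<longrightarrow>
           \<alpha> / (b powr \<alpha> - a powr \<alpha>) * conf_integral \<alpha> f a b \<ge> (f b + f a) / 2)"
proof -
  have cf: "continuous_on {a..b} f"
    using assms(5) unfolding conf_differentiable_on_def by blast
  note df = conf_differentiable_on_imp_DERIV[OF assms(5,3)]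
  note trapezoid = conf_integral_le_trapezoid[OF assms(1,3,4)]
  show ?thesis
  proof (intro conjI impI)
    assume "mono_on {a..b} (conf_deriv \<alpha> f a b)"
    then have "mono_on {a<..<b} (conf_deriv \<alpha> f a b)"
      by (rule mono_on_subset) auto
    with cf df show "\<alpha> / (b powr \<alpha> - a powr \<alpha>) * conf_integral \<alpha> f a b \<le> (f b + f a) / 2"
      by (intro trapezoid) auto
  next
    assume anti: "antimono_on {a..b} (conf_deriv \<alpha> f a b)"
    have "mono_on {a<..<b} (\<lambda>t. - conf_deriv \<alpha> f a b t)"
      using monotone_onD[OF anti] by (intro mono_onI) auto
    with cf df have
      "\<alpha> / (b powr \<alpha> - a powr \<alpha>) * conf_integral \<alpha> (\<lambda>t. - f t) a b \<le> (- f b + - f a) / 2"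
      by (intro trapezoid) (auto intro!: continuous_intros derivative_eq_intros)
    then show "\<alpha> / (b powr \<alpha> - a powr \<alpha>) * conf_integral \<alpha> f a b \<ge> (f b + f a) / 2"
      unfolding conf_integral_def by (simp add: integral_neg)
  qed
qed

end
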